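(* In $\mathcal{V}$, for all $p,q\in P$: if $p\preccurlyeq q$ then $|S_p|\leqslant|S_q|$, and if $p\preccurlyeq^\ast q$ then $|S_p|\leqslant^\ast|S_q|$.
   Context: Work in $\mathsf{ZFA}$ (set theory with atoms) over a ground model of $\mathsf{ZFC}$ containing a doubly ordered set $\langle P,\preccurlyeq,\preccurlyeq^\ast\rangle$ (i.e. $\preccurlyeq$ a partial order on $P$, $\preccurlyeq^\ast$ a preorder on $P$, and $p\preccurlyeq q\Rightarrow p\preccurlyeq^\ast q$). Write $p\prec q$ for ($p\preccurlyeq q$ and $p\neq q$). For a quadruple $\langle x_0,x_1,x_2,x_3\rangle$ and $i<4$, $\mathrm{pr}_i(\langle x_0,x_1,x_2,x_3\rangle)=x_i$. For a set $S$, $\mathscr{S}(S)$ is the set of permutations of $S$. Define recursively $A_0=\{\langle0,p,\varnothing,k\rangle\mid p\in P,k\in\omega\}$ and $A_{n+1}=A_n\cup\{\langle n+1,q,a,0\rangle\mid q\in P,a\in A_n,\mathrm{pr}_1(a)\prec q\}\cup\{\langle n+1,q,a,k\rangle\mid q\in P,a\in A_n,\mathrm{pr}_1(a)\not\preccurlyeq q,\mathrm{pr}_1(a)\preccurlyeq^\ast q,k\in\omega\}$; let $A=\bigcup_{n}A_n$, whose elements serve as the atoms. Define groups $\mathcal{G}_n\subseteq\mathscr{S}(A_n)$: $\mathcal{G}_0=\{f\in\mathscr{S}(A_0)\mid \mathrm{pr}_1(f(a))=\mathrm{pr}_1(a)\text{ for all }a\in A_0\}$; for $f\in\mathscr{S}(A_{n+1})$,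 $f\in\mathcal{G}_{n+1}$ iff $f{\upharpoonright}A_n\in\mathcal{G}_n$ and for all $b\in A_{n+1}\setminus A_n$, $\mathrm{pr}_1(f(b))=\mathrm{pr}_1(b)$ and $\mathrm{pr}_2(f(b))=f(\mathrm{pr}_2(b))$. Let $\mathcal{G}=\{\pi\in\mathscr{S}(A)\mid \pi{\upharpoonright}A_n\in\mathcal{G}_n\text{ for all }n\}$. $\mathcal{V}$ is the permutation model determined by $\mathcal{G}$ and finite supports: $x\in\mathcal{V}$ iff $x\subseteq\mathcal{V}$ and there is a finite $B\subseteq A$ (a support of $x$) such that every $\pi\in\mathcal{G}$ fixing $B$ pointwise fixes $x$. For $p\in P$, $S_p=\{a\in A\mid \mathrm{pr}_1(a)=p\}$. For cardinals, $|X|\leqslant|Y|$ means there is an injection $X\to Y$, and $|X|\leqslant^\ast|Y|$ means there is a surjection from a subset of $Y$ onto $X$ (both computed in $\mathcal{V}$). *)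

theory Defs
  imports Main
begin

text \<open>Atoms are quadruples (n, p, a, k); the third component is None for the
empty set (level 0) and Some a for an atom a.\<close>

datatype 'p atom = Atom (pr0: nat) (pr1: 'p) (pr2: "'p atom option") (pr3: nat)

definition doubly_ordered :: "'p set \<Rightarrow> ('p \<times> 'p) set \<Rightarrow> ('p \<times> 'p) set \<Rightarrow> bool" where
  "doubly_ordered P le les \<longleftrightarrow> partial_order_on P le \<and> preorder_on P les \<and>
     (\<forall>p q. (p, q) \<in> le \<longrightarrow> (p, q) \<in> les)"

fun An :: "'p set \<Rightarrow> ('p \<times> 'p) set \<Rightarrow> ('p \<times> 'p) set \<Rightarrow> nat \<Rightarrow> 'p atom set" where
  "An P le les 0 = {Atom 0 p None k | p k. p \<in> P}"
| "An P le les (Suc n) = An P le les n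
     \<union> {Atom (Suc n) q (Some a) 0 | q a. q \<in> P \<and> a \<in> An P le les n \<and>
            (pr1 a, q) \<in> le \<and> pr1 a \<noteq> q}
     \<union> {Atom (Suc n) q (Some a) k | q a k. q \<in> P \<and> a \<in> An P le les n \<and>
            (pr1 a, q) \<notin> le \<and> (pr1 a, q) \<in> les}"

definition Atoms :: "'p set \<Rightarrow> ('p \<times> 'p) set \<Rightarrow> ('p \<times> 'p) set \<Rightarrow> 'p atom set" where
  "Atoms P le les = (\<Union>n. An P le les n)"

fun inGn :: "'p set \<Rightarrow> ('p \<times> 'p) set \<Rightarrow> ('p \<times> 'p) set \<Rightarrow> nat \<Rightarrow> ('p atom \<Rightarrow> 'p atom) \<Rightarrow> bool" where
  "inGn P le les 0 f \<longleftrightarrow> bij_betw f (An P le les 0) (An P le les 0) \<and>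
     (\<forall>a \<in> An P le les 0. pr1 (f a) = pr1 a)"
| "inGn P le les (Suc n) f \<longleftrightarrow> bij_betw f (An P le les (Suc n)) (An P le les (Suc n)) \<and>
     inGn P le les n f \<and>
     (\<forall>b \<in> An P le les (Suc n) - An P le les n.
        pr1 (f b) = pr1 b \<and> pr2 (f b) = map_option f (pr2 b))"

definition inG :: "'p set \<Rightarrow> ('p \<times> 'p) set \<Rightarrow> ('p \<times> 'p) set \<Rightarrow> ('p atom \<Rightarrow> 'p atom) \<Rightarrow> bool" where
  "inG P le les \<pi> \<longleftrightarrow> bij_betw \<pi> (Atoms P le les) (Atoms P le les) \<and> (\<forall>n. inGn P le les n \<pi>)"

text \<open>A set of ordered pairs of atoms (e.g. the graph of a function between
sets of atoms) belongs to the permutation model iff it has a finite support.\<close>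

definition sym_rel :: "'p set \<Rightarrow> ('p \<times> 'p) set \<Rightarrow> ('p \<times> 'p) set \<Rightarrow> ('p atom \<times> 'p atom) set \<Rightarrow> bool" where
  "sym_rel P le les R \<longleftrightarrow> (\<exists>B. finite B \<and> B \<subseteq> Atoms P le les \<and>
     (\<forall>\<pi>. inG P le les \<pi> \<and> (\<forall>b \<in> B. \<pi> b = b) \<longrightarrow> map_prod \<pi> \<pi> ` R = R))"

definition S :: "'p set \<Rightarrow> ('p \<times> 'p) set \<Rightarrow> ('p \<times> 'p) set \<Rightarrow> 'p \<Rightarrow> 'p atom set" where
  "S P le les p = {a \<in> Atoms P le les. pr1 a = p}"

definition card_le_V :: "'p set \<Rightarrow> ('p \<times> 'p) set \<Rightarrow> ('p \<times> 'p) set \<Rightarrow> 'p atom set \<Rightarrow> 'p atom set \<Rightarrow> bool" where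
  "card_le_V P le les X Y \<longleftrightarrow> (\<exists>R. sym_rel P le les R \<and> R \<subseteq> X \<times> Y \<and>
     (\<forall>x \<in> X. \<exists>!y. (x, y) \<in> R) \<and>
     (\<forall>x1 x2 y. (x1, y) \<in> R \<and> (x2, y) \<in> R \<longrightarrow> x1 = x2))"

definition card_le_star_V :: "'p set \<Rightarrow> ('p \<times> 'p) set \<Rightarrow> ('p \<times> 'p) set \<Rightarrow> 'p atom set \<Rightarrow> 'p atom set \<Rightarrow> bool" where
  "card_le_star_V P le les X Y \<longleftrightarrow> (\<exists>R. sym_rel P le les R \<and> R \<subseteq> Y \<times> X \<and>
     (\<forall>y z1 z2. (y, z1) \<in> R \<and> (y, z2) \<in> R \<longrightarrow> z1 = z2) \<and>
     (\<forall>x \<in> X. \<exists>y. (y, x) \<in> R))"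

end

theory Submission
  imports Defs
begin

text \<open>For an atom a of level n the atom (n + 1, q, a, 0) exists whenever pr1 a \<prec> q, and
  also whenever pr1 a \<preccurlyeq>* q and pr1 a \<noteq> q. Relating a \<in> S p to its children in S q
  of the next level is preserved by every permutation in G, because G preserves levels, pr1 and
  pr2; so this relation lies in the model with empty support. If p \<prec> q, the only such child
  is (n + 1, q, a, 0), since the children with arbitrary k require pr1 a \<preccurlyeq> q to fail;
  hence the relation is an injection S p \<rightarrow> S q. If p \<preccurlyeq>* q, its converse maps a
  subset of S q onto S p. For p = q the identity suffices.\<close>

lemma map_prod_image_eq_if_equivariant:
  assumes f: "bij_betw f A A" and R: "R \<subseteq> A \<times> A"
    and equiv: "\<And>a b. a \<in> A \<Longrightarrow> b \<in> A \<Longrightarrow> (f a, f b) \<in> R \<longleftrightarrow> (a, b) \<in> R"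
  shows "map_prod f f ` R = R"
proof
  show "map_prod f f ` R \<subseteq> R"
    using R equiv by auto
next
  show "R \<subseteq> map_prod f f ` R"
  proof (rule subrelI)
    fix c d assume cd: "(c, d) \<in> R"
    then obtain a b where "a \<in> A" "b \<in> A" "c = f a" "d = f b"
      using R f unfolding bij_betw_def by blast
    then show "(c, d) \<in> map_prod f f ` R"
      using cd equiv by force
  qed
qed

lemma pr0_le_if_in_An: "a \<in> An P le les n \<Longrightarrow> pr0 a \<le> n"
  by (induction n) auto

lemma in_An_pr0: "a \<in> An P le les n \<Longrightarrow> a \<in> An P le les (pr0 a)"
proof (induction n)
  case (Suc n)
  then show ?case
    by (cases "a \<in> An P le les n") auto
qed auto

lemma An_mono: "m \<le> n \<Longrightarrow> An P le les m \<subseteq> An P le les n"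
  by (induction n) (auto simp: le_Suc_eq)

lemma in_Atoms_iff: "a \<in> Atoms P le les \<longleftrightarrow> a \<in> An P le les (pr0 a)"
  unfolding Atoms_def using in_An_pr0 by blast

lemma in_An_iff: "a \<in> An P le les n \<longleftrightarrow> a \<in> Atoms P le les \<and> pr0 a \<le> n"
proof
  assume "a \<in> An P le les n"
  then show "a \<in> Atoms P le les \<and> pr0 a \<le> n"
    unfolding Atoms_def using pr0_le_if_in_An by blast
next
  assume "a \<in> Atoms P le les \<and> pr0 a \<le> n"
  then show "a \<in> An P le les n"
    using in_Atoms_iff An_mono by blast
qed

lemma in_Atoms_Suc:
  assumes "b \<in> Atoms P le les" "pr0 b = Suc m"
  shows "b \<in> An P le les (Suc m) - An P le les m"
proof -
  have "b \<in> An P le les (Suc m)"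
    using assms in_Atoms_iff by metis
  moreover have "b \<notin> An P le les m"
    using assms(2) pr0_le_if_in_An by fastforce
  ultimately show ?thesis
    by blast
qed

lemma new_atom_parent:
  assumes "b \<in> An P le les (Suc m) - An P le les m"
  shows "\<exists>a. pr2 b = Some a \<and> ((pr1 a, pr1 b) \<in> le \<longrightarrow> pr3 b = 0)"
  using assms by auto

lemma pr2_in_Atoms:
  assumes b: "b \<in> Atoms P le les" and "pr2 b = Some a"
  shows "a \<in> Atoms P le les"
proof (cases "pr0 b")
  case 0
  then have "b \<in> An P le les 0"
    using b in_Atoms_iff by metis
  then show ?thesis
    using \<open>pr2 b = Some a\<close> by auto
next
  case (Suc m)
  then have "a \<in> An P le les m"
    using in_Atoms_Suc[OF b Suc] \<open>pr2 b = Some a\<close> by auto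
  then show ?thesis
    unfolding Atoms_def by blast
qed

lemma inG_bij_betw_An:
  assumes "inG P le les \<pi>"
  shows "bij_betw \<pi> (An P le les n) (An P le les n)"
proof -
  have "inGn P le les n \<pi>"
    using assms unfolding inG_def by blast
  then show ?thesis
    by (cases n) (simp_all only: inGn.simps)
qed

lemma inG_bij_betw_Atoms: "inG P le les \<pi> \<Longrightarrow> bij_betw \<pi> (Atoms P le les) (Atoms P le les)"
  unfolding inG_def by blast

lemma inG_in_An: "inG P le les \<pi> \<Longrightarrow> a \<in> An P le les n \<Longrightarrow> \<pi> a \<in> An P le les n"
  using inG_bij_betw_An bij_betwE by blast

lemma inG_in_Atoms: "inG P le les \<pi> \<Longrightarrow> a \<in> Atoms P le les \<Longrightarrow> \<pi> a \<in> Atoms P le les"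
  using inG_bij_betw_Atoms bij_betwE by blast

lemma inG_inj_on_Atoms: "inG P le les \<pi> \<Longrightarrow> inj_on \<pi> (Atoms P le les)"
  using inG_bij_betw_Atoms bij_betw_imp_inj_on by blast

lemma inG_pr0:
  assumes g: "inG P le les \<pi>" and a: "a \<in> Atoms P le les"
  shows "pr0 (\<pi> a) = pr0 a"
proof (rule antisym)
  have "\<pi> a \<in> An P le les (pr0 a)"
    using inG_in_An[OF g] a in_Atoms_iff by blast
  then show "pr0 (\<pi> a) \<le> pr0 a"
    by (rule pr0_le_if_in_An)
next
  let ?k = "pr0 (\<pi> a)"
  have "\<pi> a \<in> An P le les ?k"
    using in_Atoms_iff inG_in_Atoms[OF g a] by blast
  also have "An P le les ?k = \<pi> ` An P le les ?k"
    using bij_betw_imp_surj_on[OF inG_bij_betw_An[OF g]] by simp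
  finally obtain a' where a': "a' \<in> An P le les ?k" "\<pi> a' = \<pi> a"
    by (metis imageE)
  have "a' \<in> Atoms P le les"
    using a'(1) in_An_iff by blast
  then have "a' = a"
    using inj_onD[OF inG_inj_on_Atoms[OF g] a'(2)] a by blast
  then show "pr0 a \<le> ?k"
    using a'(1) pr0_le_if_in_An by blast
qed

lemma inG_new_atom:
  assumes g: "inG P le les \<pi>" and b: "b \<in> An P le les (Suc m) - An P le les m"
  shows "pr1 (\<pi> b) = pr1 b" and "pr2 (\<pi> b) = map_option \<pi> (pr2 b)"
proof -
  have "inGn P le les (Suc m) \<pi>"
    using g unfolding inG_def by blast
  then show "pr1 (\<pi> b) = pr1 b" and "pr2 (\<pi> b) = map_option \<pi> (pr2 b)"
    using b unfolding inGn.simps(2) by blast+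
qed

lemma inG_pr1:
  assumes g: "inG P le les \<pi>" and a: "a \<in> Atoms P le les"
  shows "pr1 (\<pi> a) = pr1 a"
proof (cases "pr0 a")
  case 0
  then have "a \<in> An P le les 0"
    using a in_Atoms_iff by metis
  moreover have "inGn P le les 0 \<pi>"
    using g unfolding inG_def by blast
  ultimately show ?thesis
    unfolding inGn.simps(1) by blast
next
  case (Suc m)
  show ?thesis
    by (rule inG_new_atom(1)[OF g in_Atoms_Suc[OF a Suc]])
qed

lemma inG_pr2:
  assumes g: "inG P le les \<pi>" and a: "a \<in> Atoms P le les"
  shows "pr2 (\<pi> a) = map_option \<pi> (pr2 a)"
proof (cases "pr0 a")
  case 0
  then have "a \<in> An P le les 0"
    using a in_Atoms_iff by metis
  moreover have "\<pi> a \<in> An P le les 0"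
    using calculation by (rule inG_in_An[OF g])
  ultimately show ?thesis
    by auto
next
  case (Suc m)
  show ?thesis
    by (rule inG_new_atom(2)[OF g in_Atoms_Suc[OF a Suc]])
qed

lemma inG_in_S_iff:
  assumes g: "inG P le les \<pi>" and a: "a \<in> Atoms P le les"
  shows "\<pi> a \<in> S P le les p \<longleftrightarrow> a \<in> S P le les p"
  using inG_pr1[OF g a] inG_in_Atoms[OF g a] a unfolding S_def by simp

lemma sym_rel_if_equivariant:
  assumes R: "R \<subseteq> Atoms P le les \<times> Atoms P le les"
    and equiv: "\<And>\<pi> a b. inG P le les \<pi> \<Longrightarrow> a \<in> Atoms P le les \<Longrightarrow> b \<in> Atoms P le les \<Longrightarrow>
      (\<pi> a, \<pi> b) \<in> R \<longleftrightarrow> (a, b) \<in> R"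
  shows "sym_rel P le les R"
  unfolding sym_rel_def
proof (intro exI[of _ "{}"] conjI allI impI)
  fix \<pi> assume "inG P le les \<pi> \<and> (\<forall>b \<in> {}. \<pi> b = b)"
  then have g: "inG P le les \<pi>"
    by blast
  show "map_prod \<pi> \<pi> ` R = R"
    by (rule map_prod_image_eq_if_equivariant[OF inG_bij_betw_Atoms[OF g] R equiv[OF g]])
qed auto

lemma sym_rel_Id_on_S: "sym_rel P le les (Id_on (S P le les p))"
proof (rule sym_rel_if_equivariant)
  fix \<pi> a b assume g: "inG P le les \<pi>" and ab: "a \<in> Atoms P le les" "b \<in> Atoms P le les"
  have "\<pi> a = \<pi> b \<longleftrightarrow> a = b"
    using inj_on_eq_iff[OF inG_inj_on_Atoms[OF g] ab] .
  then show "(\<pi> a, \<pi> b) \<in> Id_on (S P le les p) \<longleftrightarrow> (a, b) \<in> Id_on (S P le les p)"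
    using inG_in_S_iff[OF g ab(1)] by auto
qed (auto simp: S_def)

lemma card_le_V_if_sym_rel_Id_on: "sym_rel P le les (Id_on X) \<Longrightarrow> card_le_V P le les X X"
  unfolding card_le_V_def by (intro exI[of _ "Id_on X"]) auto

lemma card_le_star_V_if_sym_rel_Id_on: "sym_rel P le les (Id_on X) \<Longrightarrow> card_le_star_V P le les X X"
  unfolding card_le_star_V_def by (intro exI[of _ "Id_on X"]) auto

text \<open>An atom of level n + 1 may have a parent of any lower level; demanding that the level
  grow by exactly one is what makes a have at most one child (n + 1, q, a, 0) in S q.\<close>

definition child_rel :: "'p set \<Rightarrow> ('p \<times> 'p) set \<Rightarrow> ('p \<times> 'p) set \<Rightarrow> 'p \<Rightarrow> 'p \<Rightarrow> ('p atom \<times> 'p atom) set" where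
  "child_rel P le les p q = {(a, b). a \<in> S P le les p \<and> b \<in> S P le les q \<and>
     pr2 b = Some a \<and> pr0 b = Suc (pr0 a)}"

lemma child_rel_subset: "child_rel P le les p q \<subseteq> S P le les p \<times> S P le les q"
  unfolding child_rel_def by blast

lemma child_rel_equivariant:
  assumes g: "inG P le les \<pi>" and ab: "a \<in> Atoms P le les" "b \<in> Atoms P le les"
  shows "(\<pi> a, \<pi> b) \<in> child_rel P le les p q \<longleftrightarrow> (a, b) \<in> child_rel P le les p q"
proof -
  have "pr2 (\<pi> b) = Some (\<pi> a) \<longleftrightarrow> pr2 b = Some a"
  proof
    assume "pr2 (\<pi> b) = Some (\<pi> a)"
    then obtain c where c: "pr2 b = Some c" "\<pi> c = \<pi> a"
      using inG_pr2[OF g ab(2)] by auto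
    moreover have "c \<in> Atoms P le les"
      using pr2_in_Atoms[OF ab(2) c(1)] .
    ultimately show "pr2 b = Some a"
      using inj_onD[OF inG_inj_on_Atoms[OF g]] ab(1) by metis
  qed (simp add: inG_pr2[OF g ab(2)])
  then show ?thesis
    unfolding child_rel_def
    using inG_in_S_iff[OF g ab(1)] inG_in_S_iff[OF g ab(2)] inG_pr0[OF g ab(1)] inG_pr0[OF g ab(2)]
    by auto
qed

lemma sym_rel_child_rel:
  shows "sym_rel P le les (child_rel P le les p q)"
    and "sym_rel P le les ((child_rel P le les p q)\<inverse>)"
proof -
  have R: "child_rel P le les p q \<subseteq> Atoms P le les \<times> Atoms P le les"
    using child_rel_subset[of P le les p q] unfolding S_def by blast
  show "sym_rel P le les (child_rel P le les p q)"
    using R child_rel_equivariant by (rule sym_rel_if_equivariant)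
  show "sym_rel P le les ((child_rel P le les p q)\<inverse>)"
    using R by (intro sym_rel_if_equivariant) (auto simp: child_rel_equivariant)
qed

lemma child_in_child_rel:
  assumes x: "x \<in> S P le les p" and "q \<in> P" "(p, q) \<in> les" "p \<noteq> q"
  shows "(x, Atom (Suc (pr0 x)) q (Some x) 0) \<in> child_rel P le les p q"
proof -
  have "x \<in> An P le les (pr0 x)" "pr1 x = p"
    using x in_Atoms_iff unfolding S_def by auto
  then have "Atom (Suc (pr0 x)) q (Some x) 0 \<in> An P le les (Suc (pr0 x))"
    using assms by auto
  then have "Atom (Suc (pr0 x)) q (Some x) 0 \<in> Atoms P le les"
    unfolding Atoms_def by blast
  then show ?thesis
    using x unfolding child_rel_def S_def by simp
qed

lemma child_rel_unique:
  assumes xy: "(x, y) \<in> child_rel P le les p q" and "(p, q) \<in> le"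
  shows "y = Atom (Suc (pr0 x)) q (Some x) 0"
proof -
  have y: "y \<in> Atoms P le les" "pr1 y = q" "pr2 y = Some x" "pr0 y = Suc (pr0 x)"
    and "pr1 x = p"
    using xy unfolding child_rel_def S_def by auto
  obtain a where "pr2 y = Some a" "(pr1 a, pr1 y) \<in> le \<longrightarrow> pr3 y = 0"
    using new_atom_parent[OF in_Atoms_Suc[OF y(1) y(4)]] by blast
  then have "pr3 y = 0"
    using y \<open>pr1 x = p\<close> \<open>(p, q) \<in> le\<close> by simp
  then show ?thesis
    using y(2-4) atom.collapse[of y] by simp
qed

lemma child_rel_parent_unique:
  "(x1, y) \<in> child_rel P le les p q \<Longrightarrow> (x2, y) \<in> child_rel P le les p q \<Longrightarrow> x1 = x2"
  unfolding child_rel_def by auto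

lemma card_le_V_S:
  assumes "doubly_ordered P le les" "q \<in> P" "(p, q) \<in> le"
  shows "card_le_V P le les (S P le les p) (S P le les q)"
proof (cases "p = q")
  case True
  then show ?thesis
    using card_le_V_if_sym_rel_Id_on sym_rel_Id_on_S by metis
next
  case False
  have "(p, q) \<in> les"
    using assms unfolding doubly_ordered_def by blast
  have unique_child: "\<exists>!y. (x, y) \<in> child_rel P le les p q" if x: "x \<in> S P le les p" for x
  proof (rule ex1I)
    show "(x, Atom (Suc (pr0 x)) q (Some x) 0) \<in> child_rel P le les p q"
      using child_in_child_rel[OF x \<open>q \<in> P\<close> \<open>(p, q) \<in> les\<close> False] .
    show "y = Atom (Suc (pr0 x)) q (Some x) 0" if "(x, y) \<in> child_rel P le les p q" for y
      using child_rel_unique[OF that \<open>(p, q) \<in> le\<close>] .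
  qed
  show ?thesis
    unfolding card_le_V_def
  proof (intro exI[of _ "child_rel P le les p q"] conjI)
    show "sym_rel P le les (child_rel P le les p q)"
      by (rule sym_rel_child_rel(1))
    show "child_rel P le les p q \<subseteq> S P le les p \<times> S P le les q"
      by (rule child_rel_subset)
    show "\<forall>x \<in> S P le les p. \<exists>!y. (x, y) \<in> child_rel P le les p q"
      using unique_child by (rule ballI)
    show "\<forall>x1 x2 y. (x1, y) \<in> child_rel P le les p q \<and> (x2, y) \<in> child_rel P le les p q \<longrightarrow> x1 = x2"
      using child_rel_parent_unique by meson
  qed
qed

lemma card_le_star_V_S:
  assumes "q \<in> P" "(p, q) \<in> les"
  shows "card_le_star_V P le les (S P le les p) (S P le les q)"
proof (cases "p = q")
  case True
  then show ?thesis
    using card_le_star_V_if_sym_rel_Id_on sym_rel_Id_on_S by metis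
next
  case False
  show ?thesis
    unfolding card_le_star_V_def
  proof (intro exI[of _ "(child_rel P le les p q)\<inverse>"] conjI)
    show "sym_rel P le les ((child_rel P le les p q)\<inverse>)"
      by (rule sym_rel_child_rel(2))
    show "(child_rel P le les p q)\<inverse> \<subseteq> S P le les q \<times> S P le les p"
      using child_rel_subset[of P le les p q] by blast
    show "\<forall>y z1 z2. (y, z1) \<in> (child_rel P le les p q)\<inverse> \<and> (y, z2) \<in> (child_rel P le les p q)\<inverse> \<longrightarrow> z1 = z2"
      using child_rel_parent_unique by (meson converse_iff)
    show "\<forall>x \<in> S P le les p. \<exists>y. (y, x) \<in> (child_rel P le les p q)\<inverse>"
      using child_in_child_rel[OF _ assms False] by blast
  qed
qed

theorem lemma2p1:
  fixes P :: "'p set" and le les :: "('p \<times> 'p) set"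
  assumes "doubly_ordered P le les"
  shows "\<forall>p \<in> P. \<forall>q \<in> P.
    ((p, q) \<in> le \<longrightarrow> card_le_V P le les (S P le les p) (S P le les q)) \<and>
    ((p, q) \<in> les \<longrightarrow> card_le_star_V P le les (S P le les p) (S P le les q))"
proof (intro ballI conjI impI)
  fix p q assume "p \<in> P" "q \<in> P"
  show "(p, q) \<in> le \<Longrightarrow> card_le_V P le les (S P le les p) (S P le les q)"
    by (rule card_le_V_S[OF assms \<open>q \<in> P\<close>])
  show "(p, q) \<in> les \<Longrightarrow> card_le_star_V P le les (S P le les p) (S P le les q)"
    by (rule card_le_star_V_S[OF \<open>q \<in> P\<close>])
qed

end
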